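(* Let $\mathcal{F}\subseteq 2^{[n]}$ be an s-extremal family. Then there is a unique Sperner family $\mathcal{S}\subseteq 2^{[n]}$ and a unique function $h:\mathcal{S}\to 2^{[n]}$ with $h(S)\subseteq S$ for every $S\in\mathcal{S}$ such that $\mathcal{F}=\mathcal{F}(\mathcal{S},h)$ and $\mathrm{Sh}(\mathcal{F})=\mathcal{H}(\mathcal{S})$.
   Context: $[n]=\{1,\dots,n\}$. A Sperner family is a family of sets none of which is contained in another. $\mathcal{F}$ shatters $S$ if $\{F\cap S:F\in\mathcal{F}\}=2^S$; $\mathrm{Sh}(\mathcal{F})$ is the family of shattered sets; $\mathcal{F}$ is s-extremal if $|\mathrm{Sh}(\mathcal{F})|=|\mathcal{F}|$. For $H\subseteq S\subseteq[n]$, $\mathcal{Q}_{S,H}=\{H\cup B: B\subseteq[n]\setminus S\}$. $\mathcal{H}(\mathcal{S})=\{F\subseteq[n]: \text{no } S\in\mathcal{S} \text{ satisfies } S\subseteq F\}$, and $\mathcal{F}(\mathcal{S},h)=2^{[n]}\setminus\bigcup_{S\in\mathcal{S}}\mathcal{Q}_{S,h(S)}$. *)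

theory Defs
  imports Main "HOL-Library.FuncSet"
begin

definition sperner :: "'a set set \<Rightarrow> bool" where
  "sperner \<S> \<longleftrightarrow> (\<forall>A\<in>\<S>. \<forall>B\<in>\<S>. A \<subseteq> B \<longrightarrow> A = B)"

definition shatters :: "'a set set \<Rightarrow> 'a set \<Rightarrow> bool" where
  "shatters \<F> S \<longleftrightarrow> (\<lambda>F. F \<inter> S) ` \<F> = Pow S"

definition Sh :: "nat \<Rightarrow> nat set set \<Rightarrow> nat set set" where
  "Sh n \<F> = {S. S \<subseteq> {1..n} \<and> shatters \<F> S}"

definition s_extremal :: "nat \<Rightarrow> nat set set \<Rightarrow> bool" where
  "s_extremal n \<F> \<longleftrightarrow> card (Sh n \<F>) = card \<F>"

definition Q :: "nat \<Rightarrow> nat set \<Rightarrow> nat set \<Rightarrow> nat set set" where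
  "Q n S H = {H \<union> B | B. B \<subseteq> {1..n} - S}"

definition HS :: "nat \<Rightarrow> nat set set \<Rightarrow> nat set set" where
  "HS n \<S> = {F. F \<subseteq> {1..n} \<and> \<not> (\<exists>S\<in>\<S>. S \<subseteq> F)}"

definition FS :: "nat \<Rightarrow> nat set set \<Rightarrow> (nat set \<Rightarrow> nat set) \<Rightarrow> nat set set" where
  "FS n \<S> h = Pow {1..n} - (\<Union>S\<in>\<S>. Q n S (h S))"

end

(*
  Pajor's inequality |F| <= |Sh F| follows by induction on the ground set: splitting F at an
  element x into its deletion F - x and its reduction (the sets G with x not in G and both G and
  G + x in F), the cardinalities add up to |F|, while the shattered sets of the two parts embed
  disjointly into Sh F (the second via S |-> S + x). Hence equality for F forces equality for
  the deletion, and so for every trace F|S.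

  The Sperner family in question must be the family M of minimal non-shattered sets, since a
  Sperner family M is recovered from H(M) as its minimal non-members. For T in M, Sh (F|T)
  consists of the proper subsets of T, so extremality of F|T leaves exactly one pattern h T on T
  that no member of F realises. Then F is contained in F(M,h), and no set shattered by F(M,h)
  contains a member of M; therefore |F(M,h)| <= |Sh F(M,h)| <= |H(M)| = |Sh F| = |F|, which
  forces F = F(M,h).
*)
theory Submission
  imports Defs
begin

definition sh :: "'a set set \<Rightarrow> 'a set set" where
  "sh F = {S. shatters F S}"

definition trace :: "'a set \<Rightarrow> 'a set set \<Rightarrow> 'a set set" where
  "trace S F = (\<lambda>G. G \<inter> S) ` F"

definition deletion :: "'a \<Rightarrow> 'a set set \<Rightarrow> 'a set set" where
  "deletion x F = (\<lambda>G. G - {x}) ` F"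

definition reduction :: "'a \<Rightarrow> 'a set set \<Rightarrow> 'a set set" where
  "reduction x F = {G \<in> F. x \<notin> G \<and> insert x G \<in> F}"

definition minimal_excluded :: "'a set \<Rightarrow> 'a set set \<Rightarrow> 'a set set" where
  "minimal_excluded U \<A> = {S. S \<subseteq> U \<and> S \<notin> \<A> \<and> (\<forall>T. T \<subset> S \<longrightarrow> T \<in> \<A>)}"

lemma shatters_iff_trace: "shatters F S \<longleftrightarrow> trace S F = Pow S"
  by (simp add: shatters_def trace_def)

lemma trace_trace: "T \<subseteq> S \<Longrightarrow> trace T (trace S F) = trace T F"
  unfolding trace_def image_image by (intro image_cong) auto

lemma trace_Pow:
  assumes "T \<subseteq> S"
  shows "trace T (Pow S) = Pow T"
proof
  show "trace T (Pow S) \<subseteq> Pow T" unfolding trace_def by auto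
  show "Pow T \<subseteq> trace T (Pow S)"
  proof
    fix B assume "B \<in> Pow T"
    then have "B = B \<inter> T" "B \<in> Pow S" using assms by auto
    then show "B \<in> trace T (Pow S)" unfolding trace_def by blast
  qed
qed

lemma shatters_subset_Union:
  assumes "shatters F S"
  shows "S \<subseteq> \<Union>F"
proof -
  have "S \<in> trace S F" using assms by (simp add: shatters_iff_trace)
  then show ?thesis unfolding trace_def by auto
qed

lemma shatters_subset:
  assumes "shatters F S" "T \<subseteq> S"
  shows "shatters F T"
proof -
  have "trace T F = trace T (trace S F)" using assms(2) by (simp add: trace_trace)
  also have "\<dots> = Pow T" using assms by (simp add: shatters_iff_trace trace_Pow)
  finally show ?thesis by (simp add: shatters_iff_trace)
qed

lemma sh_subset_Pow: "F \<subseteq> Pow U \<Longrightarrow> sh F \<subseteq> Pow U"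
  unfolding sh_def using shatters_subset_Union by blast

lemma sh_trace: "sh (trace S F) = sh F \<inter> Pow S"
proof -
  have "\<Union>(trace S F) \<subseteq> S" unfolding trace_def by auto
  have "shatters (trace S F) T \<longleftrightarrow> shatters F T \<and> T \<subseteq> S" for T
  proof
    assume T: "shatters (trace S F) T"
    then have "T \<subseteq> S" using shatters_subset_Union \<open>\<Union>(trace S F) \<subseteq> S\<close> by blast
    then show "shatters F T \<and> T \<subseteq> S" using T by (simp add: shatters_iff_trace trace_trace)
  qed (simp add: shatters_iff_trace trace_trace)
  then show ?thesis unfolding sh_def by auto
qed

lemma card_deletion_reduction:
  assumes "finite F"
  shows "card F = card (deletion x F) + card (reduction x F)"
proof -
  define F1 where "F1 = {G \<in> F. x \<in> G}"
  define F0 where "F0 = F - F1"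
  define F1' where "F1' = (\<lambda>G. G - {x}) ` F1"
  have fin: "finite F0" "finite F1" "finite F1'"
    using assms unfolding F0_def F1_def F1'_def by auto
  have F: "F = F0 \<union> F1" "F0 \<inter> F1 = {}" unfolding F0_def F1_def by auto
  have "card F = card F0 + card F1" using card_Un_disjoint[OF fin(1,2) F(2)] F(1) by simp
  moreover have "inj_on (\<lambda>G. G - {x}) F1"
    unfolding F1_def inj_on_def by (metis (mono_tags, lifting) insert_Diff mem_Collect_eq)
  then have "card F1' = card F1" unfolding F1'_def by (simp add: card_image)
  moreover have "deletion x F = F0 \<union> F1'"
  proof -
    have "(\<lambda>G. G - {x}) ` F0 = F0"
      by (rule trans[OF image_cong image_ident]) (auto simp: F0_def F1_def)
    moreover have "deletion x F = (\<lambda>G. G - {x}) ` F0 \<union> F1'"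
      unfolding deletion_def F1'_def by (subst F(1)) (rule image_Un)
    ultimately show ?thesis by simp
  qed
  moreover have "reduction x F = F0 \<inter> F1'"
  proof
    show "reduction x F \<subseteq> F0 \<inter> F1'"
    proof
      fix G assume "G \<in> reduction x F"
      then have "G \<in> F" "x \<notin> G" "insert x G \<in> F1" unfolding reduction_def F1_def by auto
      moreover have "G = insert x G - {x}" using \<open>x \<notin> G\<close> by simp
      ultimately show "G \<in> F0 \<inter> F1'" unfolding F0_def F1_def F1'_def by blast
    qed
    show "F0 \<inter> F1' \<subseteq> reduction x F"
    proof
      fix G assume "G \<in> F0 \<inter> F1'"
      then obtain H where "G \<in> F" "x \<notin> G" "H \<in> F" "x \<in> H" "G = H - {x}"
        unfolding F0_def F1_def F1'_def by auto
      then have "insert x G = H" by auto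
      with \<open>G \<in> F\<close> \<open>x \<notin> G\<close> \<open>H \<in> F\<close> show "G \<in> reduction x F" unfolding reduction_def by simp
    qed
  qed
  ultimately show ?thesis using card_Un_Int[OF fin(1,3)] by presburger
qed

lemma sh_deletionD: "S \<in> sh (deletion x F) \<Longrightarrow> x \<notin> S \<and> S \<in> sh F"
proof -
  assume "S \<in> sh (deletion x F)"
  then have S: "shatters (deletion x F) S" unfolding sh_def by simp
  have "x \<notin> \<Union>(deletion x F)" unfolding deletion_def by auto
  then have "x \<notin> S" using shatters_subset_Union[OF S] by blast
  then have "trace S (deletion x F) = trace S F"
    unfolding trace_def deletion_def image_image by (intro image_cong) auto
  then show ?thesis using S \<open>x \<notin> S\<close> unfolding sh_def by (simp add: shatters_iff_trace)
qed

lemma sh_reductionD: "S \<in> sh (reduction x F) \<Longrightarrow> x \<notin> S \<and> insert x S \<in> sh F"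
proof -
  assume "S \<in> sh (reduction x F)"
  then have S: "shatters (reduction x F) S" unfolding sh_def by simp
  have "x \<notin> \<Union>(reduction x F)" unfolding reduction_def by auto
  then have "x \<notin> S" using shatters_subset_Union[OF S] by blast
  have "P \<in> trace (insert x S) F" if "P \<subseteq> insert x S" for P
  proof -
    have "P - {x} \<in> trace S (reduction x F)" using S that by (auto simp: shatters_iff_trace)
    then obtain G where G: "G \<in> F" "x \<notin> G" "insert x G \<in> F" "G \<inter> S = P - {x}"
      unfolding trace_def reduction_def by auto
    show ?thesis
    proof (cases "x \<in> P")
      case True
      then have "insert x G \<inter> insert x S = P" using G(4) by auto
      then show ?thesis using G(3) unfolding trace_def by blast
    next
      case False
      then have "G \<inter> insert x S = P" using G(2,4) by auto
      then show ?thesis using G(1) unfolding trace_def by blast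
    qed
  qed
  then have "trace (insert x S) F = Pow (insert x S)" unfolding trace_def by auto
  then show ?thesis using \<open>x \<notin> S\<close> unfolding sh_def by (simp add: shatters_iff_trace)
qed

lemma card_sh_deletion_reduction_le:
  assumes "finite U" "F \<subseteq> Pow U"
  shows "card (sh (deletion x F)) + card (sh (reduction x F)) \<le> card (sh F)"
proof -
  let ?D = "sh (deletion x F)" and ?R = "insert x ` sh (reduction x F)"
  have fin: "finite (sh F)" using sh_subset_Pow[OF assms(2)] assms(1) finite_subset by auto
  have sub: "?D \<union> ?R \<subseteq> sh F" using sh_deletionD[of _ x F] sh_reductionD[of _ x F] by blast
  then have finDR: "finite ?D" "finite ?R" using fin finite_subset by auto
  have disj: "?D \<inter> ?R = {}" using sh_deletionD[of _ x F] by blast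
  have "inj_on (insert x) (sh (reduction x F))"
  proof (rule inj_onI)
    fix A B assume "A \<in> sh (reduction x F)" "B \<in> sh (reduction x F)" "insert x A = insert x B"
    moreover from this(1,2) have "x \<notin> A" "x \<notin> B" using sh_reductionD[of _ x F] by auto
    ultimately show "A = B" by (metis Diff_insert_absorb)
  qed
  then have "card ?R = card (sh (reduction x F))" by (rule card_image)
  moreover have "card ?D + card ?R = card (?D \<union> ?R)"
    using card_Un_disjoint[OF finDR disj] by simp
  ultimately show ?thesis using card_mono[OF fin sub] by linarith
qed

lemma card_le_card_sh:
  assumes "finite U" "F \<subseteq> Pow U"
  shows "card F \<le> card (sh F)"
  using assms
proof (induction U arbitrary: F rule: finite_induct)
  case empty
  show ?case
  proof (cases "F = {}")
    case False
    then have "F = {{}}" using empty.prems by auto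
    moreover have "finite (sh F)" using sh_subset_Pow[OF empty.prems] finite_subset by auto
    moreover have "{} \<in> sh F" using False unfolding sh_def shatters_def by auto
    ultimately show ?thesis using card_mono[of "sh F" "{{}}"] by simp
  qed simp
next
  case (insert x U)
  have "deletion x F \<subseteq> Pow U" "reduction x F \<subseteq> Pow U"
    using insert.prems unfolding deletion_def reduction_def by auto
  then have "card (deletion x F) \<le> card (sh (deletion x F))"
    "card (reduction x F) \<le> card (sh (reduction x F))"
    using insert.IH by auto
  moreover have "finite F" using insert.prems insert.hyps(1) finite_subset by blast
  ultimately show ?case
    using card_deletion_reduction[of F x] card_sh_deletion_reduction_le[OF _ insert.prems, of x]
      insert.hyps(1) by simp
qed

lemma card_sh_deletion_eq:
  assumes "finite U" "F \<subseteq> Pow U" "card (sh F) = card F"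
  shows "card (sh (deletion x F)) = card (deletion x F)"
proof -
  have "deletion x F \<subseteq> Pow U" "reduction x F \<subseteq> Pow U"
    using assms(2) unfolding deletion_def reduction_def by auto
  then have "card (deletion x F) \<le> card (sh (deletion x F))"
    "card (reduction x F) \<le> card (sh (reduction x F))"
    using card_le_card_sh[OF assms(1)] by auto
  moreover have "finite F" using assms(1,2) finite_subset by blast
  ultimately show ?thesis
    using card_deletion_reduction[of F x] card_sh_deletion_reduction_le[OF assms(1,2), of x] assms(3)
    by simp
qed

lemma card_sh_image_Diff_eq:
  assumes "finite D" "finite U" "F \<subseteq> Pow U" "card (sh F) = card F"
  shows "card (sh ((\<lambda>G. G - D) ` F)) = card ((\<lambda>G. G - D) ` F)"
  using assms(1,3,4)
proof (induction D arbitrary: F rule: finite_induct)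
  case (insert x D)
  have "(\<lambda>G. G - insert x D) ` F = (\<lambda>G. G - D) ` deletion x F"
    unfolding deletion_def image_image by (intro image_cong) auto
  moreover have "deletion x F \<subseteq> Pow U" using insert.prems(1) unfolding deletion_def by auto
  ultimately show ?case using insert.IH card_sh_deletion_eq[OF assms(2) insert.prems] by simp
qed simp

lemma card_sh_trace_eq:
  assumes "finite U" "F \<subseteq> Pow U" "card (sh F) = card F"
  shows "card (sh (trace S F)) = card (trace S F)"
proof -
  have "trace S F = (\<lambda>G. G - (U - S)) ` F"
    unfolding trace_def using assms(2) by (intro image_cong) auto
  then show ?thesis using card_sh_image_Diff_eq[of "U - S", OF _ assms] assms(1) by simp
qed

lemma missing_trace_singleton:
  assumes "finite U" "F \<subseteq> Pow U" "card (sh F) = card F" "S \<in> minimal_excluded U (sh F)"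
  shows "\<exists>H. Pow S - trace S F = {H}"
proof -
  have S: "S \<subseteq> U" "S \<notin> sh F" "\<And>T. T \<subset> S \<Longrightarrow> T \<in> sh F"
    using assms(4) unfolding minimal_excluded_def by auto
  then have finS: "finite S" using assms(1) finite_subset by auto
  have "sh (trace S F) = Pow S - {S}" using S unfolding sh_trace by auto
  then have "card (trace S F) = card (Pow S - {S})"
    using card_sh_trace_eq[OF assms(1-3), of S] by simp
  also have "\<dots> = 2 ^ card S - 1" using finS by (simp add: card_Pow)
  moreover have "trace S F \<subseteq> Pow S" unfolding trace_def by auto
  ultimately have "card (Pow S - trace S F) = 1"
    using finS by (simp add: card_Diff_subset finite_subset card_Pow)
  then show ?thesis by (simp add: card_1_singleton_iff)
qed

lemma sperner_minimal_excluded: "sperner (minimal_excluded U \<A>)"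
  unfolding sperner_def minimal_excluded_def by (metis (no_types, lifting) mem_Collect_eq psubsetI)

lemma minimal_excluded_HS:
  assumes "\<S> \<subseteq> Pow {1..n}" "sperner \<S>"
  shows "minimal_excluded {1..n} (HS n \<S>) = \<S>"
proof
  show "minimal_excluded {1..n} (HS n \<S>) \<subseteq> \<S>"
  proof
    fix S assume "S \<in> minimal_excluded {1..n} (HS n \<S>)"
    then have S: "S \<subseteq> {1..n}" "S \<notin> HS n \<S>" "\<And>T. T \<subset> S \<Longrightarrow> T \<in> HS n \<S>"
      unfolding minimal_excluded_def by auto
    then obtain S' where "S' \<in> \<S>" "S' \<subseteq> S" unfolding HS_def by auto
    moreover have "S' \<notin> HS n \<S>" using \<open>S' \<in> \<S>\<close> unfolding HS_def by auto
    ultimately show "S \<in> \<S>" using S(3) by blast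
  qed
  show "\<S> \<subseteq> minimal_excluded {1..n} (HS n \<S>)"
  proof
    fix S assume S: "S \<in> \<S>"
    have "T \<in> HS n \<S>" if "T \<subset> S" for T
    proof -
      have "\<not> S' \<subseteq> T" if "S' \<in> \<S>" for S'
        using assms(2) S \<open>T \<subset> S\<close> that unfolding sperner_def by blast
      then show ?thesis using assms(1) S \<open>T \<subset> S\<close> unfolding HS_def by blast
    qed
    then show "S \<in> minimal_excluded {1..n} (HS n \<S>)"
      using assms(1) S unfolding minimal_excluded_def HS_def by blast
  qed
qed

lemma minimal_excluded_below:
  assumes "finite G" "G \<subseteq> U" "G \<notin> \<A>"
  shows "\<exists>S\<in>minimal_excluded U \<A>. S \<subseteq> G"
  using assms
proof (induction G rule: finite_psubset_induct)
  case (psubset G)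
  show ?case
  proof (cases "\<forall>T. T \<subset> G \<longrightarrow> T \<in> \<A>")
    case True
    then have "G \<in> minimal_excluded U \<A>" using psubset.prems unfolding minimal_excluded_def by blast
    then show ?thesis by blast
  next
    case False
    then obtain T where "T \<subset> G" "T \<notin> \<A>" by blast
    then obtain S where "S \<in> minimal_excluded U \<A>" "S \<subseteq> T"
      using psubset.IH[of T] psubset.prems(1) by blast
    then show ?thesis using \<open>T \<subset> G\<close> by blast
  qed
qed

lemma HS_minimal_excluded:
  assumes "\<A> \<subseteq> Pow {1..n}" "\<And>A B. A \<in> \<A> \<Longrightarrow> B \<subseteq> A \<Longrightarrow> B \<in> \<A>"
  shows "HS n (minimal_excluded {1..n} \<A>) = \<A>"
proof
  show "\<A> \<subseteq> HS n (minimal_excluded {1..n} \<A>)"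
  proof
    fix A assume "A \<in> \<A>"
    then have "S \<notin> minimal_excluded {1..n} \<A>" if "S \<subseteq> A" for S
      using assms(2) that unfolding minimal_excluded_def by blast
    then show "A \<in> HS n (minimal_excluded {1..n} \<A>)"
      using assms(1) \<open>A \<in> \<A>\<close> unfolding HS_def by blast
  qed
  show "HS n (minimal_excluded {1..n} \<A>) \<subseteq> \<A>"
  proof
    fix G assume G: "G \<in> HS n (minimal_excluded {1..n} \<A>)"
    then have "G \<subseteq> {1..n}" unfolding HS_def by simp
    then show "G \<in> \<A>"
      using G minimal_excluded_below[of G "{1..n}" \<A>] finite_subset unfolding HS_def by blast
  qed
qed

lemma mem_Q_iff:
  assumes "H \<subseteq> S" "G \<subseteq> {1..n}"
  shows "G \<in> Q n S H \<longleftrightarrow> G \<inter> S = H"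
proof
  assume "G \<in> Q n S H"
  then obtain B where "G = H \<union> B" "B \<subseteq> {1..n} - S" unfolding Q_def by blast
  then show "G \<inter> S = H" using assms(1) by blast
next
  assume "G \<inter> S = H"
  then have "G = H \<union> (G - S)" "G - S \<subseteq> {1..n} - S" using assms(2) by blast+
  then show "G \<in> Q n S H" unfolding Q_def by blast
qed

lemma mem_FS_iff:
  assumes "\<forall>S\<in>\<S>. h S \<subseteq> S"
  shows "G \<in> FS n \<S> h \<longleftrightarrow> G \<subseteq> {1..n} \<and> (\<forall>S\<in>\<S>. G \<inter> S \<noteq> h S)"
proof -
  have "G \<in> Q n S (h S) \<longleftrightarrow> G \<inter> S = h S" if "G \<subseteq> {1..n}" "S \<in> \<S>" for S
    using mem_Q_iff assms that by blast
  then show ?thesis unfolding FS_def by blast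
qed

lemma FS_misses_trace:
  assumes "\<forall>S\<in>\<S>. h S \<subseteq> S" "S \<in> \<S>"
  shows "h S \<in> Pow S - trace S (FS n \<S> h)"
proof -
  have "G \<inter> S \<noteq> h S" if "G \<in> FS n \<S> h" for G
    using mem_FS_iff[OF assms(1)] that assms(2) by blast
  then show ?thesis using assms unfolding trace_def by auto
qed

lemma Sh_FS_subset_HS:
  assumes "\<forall>S\<in>\<S>. h S \<subseteq> S"
  shows "Sh n (FS n \<S> h) \<subseteq> HS n \<S>"
proof
  fix T assume "T \<in> Sh n (FS n \<S> h)"
  then have T: "T \<subseteq> {1..n}" "shatters (FS n \<S> h) T" unfolding Sh_def by auto
  have "\<not> S \<subseteq> T" if "S \<in> \<S>" for S
  proof
    assume "S \<subseteq> T"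
    then have "trace S (FS n \<S> h) = Pow S"
      using shatters_subset[OF T(2)] by (simp add: shatters_iff_trace)
    then show False using FS_misses_trace[OF assms that, of n] by simp
  qed
  then show "T \<in> HS n \<S>" using T(1) unfolding HS_def by auto
qed

lemma Sh_eq_sh: "F \<subseteq> Pow {1..n} \<Longrightarrow> Sh n F = sh F"
  using sh_subset_Pow unfolding Sh_def sh_def by blast

lemma HS_minimal_excluded_sh:
  assumes "F \<subseteq> Pow {1..n}"
  shows "HS n (minimal_excluded {1..n} (sh F)) = sh F"
  using sh_subset_Pow[OF assms] shatters_subset by (intro HS_minimal_excluded) (auto simp: sh_def)

lemma FS_representation_determined:
  assumes "\<S> \<subseteq> Pow {1..n}" "sperner \<S>" "\<forall>S\<in>\<S>. h S \<subseteq> S"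
    and "F = FS n \<S> h" "Sh n F = HS n \<S>"
  shows "\<S> = minimal_excluded {1..n} (Sh n F)" "\<forall>S\<in>\<S>. h S \<in> Pow S - trace S F"
  using minimal_excluded_HS[OF assms(1,2)] assms(5) FS_misses_trace[OF assms(3), of _ n] assms(4)
  by auto

lemma extremal_eq_FS:
  assumes "F \<subseteq> Pow {1..n}" "card (sh F) = card F"
    and "\<forall>S\<in>minimal_excluded {1..n} (sh F). Pow S - trace S F = {h S}"
  shows "F = FS n (minimal_excluded {1..n} (sh F)) h"
proof -
  let ?\<S> = "minimal_excluded {1..n} (sh F)"
  have h: "\<forall>S\<in>?\<S>. h S \<subseteq> S" using assms(3) by blast
  have sub: "F \<subseteq> FS n ?\<S> h"
  proof
    fix G assume "G \<in> F"
    then have "G \<inter> S \<noteq> h S" if "S \<in> ?\<S>" for S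
      using assms(3) that unfolding trace_def by blast
    then show "G \<in> FS n ?\<S> h" using \<open>G \<in> F\<close> assms(1) mem_FS_iff[OF h] by blast
  qed
  have FS: "FS n ?\<S> h \<subseteq> Pow {1..n}" unfolding FS_def by blast
  have "card (FS n ?\<S> h) \<le> card (sh (FS n ?\<S> h))" by (rule card_le_card_sh[OF _ FS]) simp
  also have "\<dots> \<le> card (sh F)"
  proof (rule card_mono)
    show "finite (sh F)" using sh_subset_Pow[OF assms(1)] finite_subset by auto
    show "sh (FS n ?\<S> h) \<subseteq> sh F"
      using Sh_FS_subset_HS[OF h, of n] Sh_eq_sh[OF FS] HS_minimal_excluded_sh[OF assms(1)] by simp
  qed
  finally have "card (FS n ?\<S> h) \<le> card F" using assms(2) by simp
  then show ?thesis using card_seteq[OF _ sub] FS finite_subset by blast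
qed

lemma missing_pattern_function:
  fixes F :: "nat set set"
  assumes "F \<subseteq> Pow {1..n}" "card (sh F) = card F"
  defines "h \<equiv> \<lambda>S\<in>minimal_excluded {1..n} (sh F). the_elem (Pow S - trace S F)"
  shows "\<forall>S\<in>minimal_excluded {1..n} (sh F). Pow S - trace S F = {h S}"
    and "h \<in> minimal_excluded {1..n} (sh F) \<rightarrow>\<^sub>E Pow {1..n}"
proof -
  show missing: "\<forall>S\<in>minimal_excluded {1..n} (sh F). Pow S - trace S F = {h S}"
  proof
    fix S assume S: "S \<in> minimal_excluded {1..n} (sh F)"
    then obtain H where "Pow S - trace S F = {H}"
      using missing_trace_singleton[OF finite_atLeastAtMost assms(1,2) S] by blast
    then show "Pow S - trace S F = {h S}" using S unfolding h_def by simp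
  qed
  have "h S \<in> Pow {1..n}" if S: "S \<in> minimal_excluded {1..n} (sh F)" for S
  proof -
    have "h S \<in> Pow S" using missing S by (metis Diff_iff insertI1)
    moreover have "S \<subseteq> {1..n}" using S unfolding minimal_excluded_def by simp
    ultimately show ?thesis by blast
  qed
  moreover have "h \<in> extensional (minimal_excluded {1..n} (sh F))" unfolding h_def by simp
  ultimately show "h \<in> minimal_excluded {1..n} (sh F) \<rightarrow>\<^sub>E Pow {1..n}" by (simp add: PiE_iff)
qed

lemma ex1_pairI:
  assumes "P a b" "\<And>x y. P x y \<Longrightarrow> x = a \<and> y = b"
  shows "\<exists>!(x, y). P x y"
proof (rule ex1I[of _ "(a, b)"])
  show "case (a, b) of (x, y) \<Rightarrow> P x y" using assms(1) by simp
  show "p = (a, b)" if "case p of (x, y) \<Rightarrow> P x y" for p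
    using that assms(2) by (cases p) simp
qed

theorem lemma8:
  fixes n :: nat and \<F> :: "nat set set"
  assumes "\<F> \<subseteq> Pow {1..n}"
    and "s_extremal n \<F>"
  shows "\<exists>!(\<S>, h). \<S> \<subseteq> Pow {1..n} \<and> sperner \<S>
            \<and> h \<in> \<S> \<rightarrow>\<^sub>E Pow {1..n} \<and> (\<forall>S\<in>\<S>. h S \<subseteq> S)
            \<and> \<F> = FS n \<S> h \<and> Sh n \<F> = HS n \<S>"
proof -
  have Sh: "Sh n \<F> = sh \<F>" using Sh_eq_sh[OF assms(1)] .
  have extremal: "card (sh \<F>) = card \<F>" using assms(2) Sh unfolding s_extremal_def by simp
  define \<S>\<^sub>0 where "\<S>\<^sub>0 = minimal_excluded {1..n} (sh \<F>)"
  define h\<^sub>0 where "h\<^sub>0 = (\<lambda>S\<in>\<S>\<^sub>0. the_elem (Pow S - trace S \<F>))"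
  have missing: "\<forall>S\<in>\<S>\<^sub>0. Pow S - trace S \<F> = {h\<^sub>0 S}" and h\<^sub>0_PiE: "h\<^sub>0 \<in> \<S>\<^sub>0 \<rightarrow>\<^sub>E Pow {1..n}"
    using missing_pattern_function[OF assms(1) extremal] unfolding \<S>\<^sub>0_def h\<^sub>0_def by blast+
  have HS: "HS n \<S>\<^sub>0 = sh \<F>" unfolding \<S>\<^sub>0_def using HS_minimal_excluded_sh[OF assms(1)] .
  define P where "P \<S> h \<longleftrightarrow> \<S> \<subseteq> Pow {1..n} \<and> sperner \<S>
      \<and> h \<in> \<S> \<rightarrow>\<^sub>E Pow {1..n} \<and> (\<forall>S\<in>\<S>. h S \<subseteq> S) \<and> \<F> = FS n \<S> h \<and> Sh n \<F> = HS n \<S>"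
    for \<S> h
  have exists: "P \<S>\<^sub>0 h\<^sub>0"
    unfolding P_def
  proof (intro conjI)
    show "sperner \<S>\<^sub>0" unfolding \<S>\<^sub>0_def by (rule sperner_minimal_excluded)
    show "\<F> = FS n \<S>\<^sub>0 h\<^sub>0"
      using extremal_eq_FS[OF assms(1) extremal, folded \<S>\<^sub>0_def] missing by blast
    show "Sh n \<F> = HS n \<S>\<^sub>0" using Sh HS by simp
    show "\<S>\<^sub>0 \<subseteq> Pow {1..n}" unfolding \<S>\<^sub>0_def minimal_excluded_def by blast
    show "h\<^sub>0 \<in> \<S>\<^sub>0 \<rightarrow>\<^sub>E Pow {1..n}" by (rule h\<^sub>0_PiE)
    show "\<forall>S\<in>\<S>\<^sub>0. h\<^sub>0 S \<subseteq> S" using missing by blast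
  qed
  have unique: "\<S> = \<S>\<^sub>0 \<and> h = h\<^sub>0" if "P \<S> h" for \<S> h
  proof -
    from that have h: "h \<in> \<S> \<rightarrow>\<^sub>E Pow {1..n}"
      and \<S>: "\<S> = minimal_excluded {1..n} (Sh n \<F>)" "\<forall>S\<in>\<S>. h S \<in> Pow S - trace S \<F>"
      unfolding P_def using FS_representation_determined[of \<S> n h \<F>] by blast+
    then have "\<S> = \<S>\<^sub>0" using Sh unfolding \<S>\<^sub>0_def by simp
    moreover have "h = h\<^sub>0"
      using h \<S>(2) missing unfolding \<open>\<S> = \<S>\<^sub>0\<close> by (intro PiE_ext[OF _ h\<^sub>0_PiE]) auto
    ultimately show ?thesis ..
  qed
  show ?thesis unfolding P_def[symmetric] using exists unique by (rule ex1_pairI)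
qed

end
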